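(* Let $\alpha=\{a_k\}_{k\ge1}$ be a sequence of positive integers such that $A(m):=\#\{k: a_k=m\}$ satisfies $A(m)=O(m^\nu)$ for some $\nu>0$. Then $\lim_{N\to\infty}E[U_j^N]=I(\alpha;j)<\infty$ for all $j\ge2$.
   Context: For $N\ge2$, coupon type $k\in\{1,\dots,N\}$ has probability $a_k/\sum_{i=1}^Na_i$; $U_j^N$ is the number of empty album places of the $j$-th collector when the first collector completes her set (each collector passes duplicates to the next one), with $$E[U_j^N]=\sum_{k=1}^N\int_0^\infty a_k e^{-a_k t}\frac{(a_kt)^{j-1}}{(j-1)!}\prod_{i\ne k,\,1\le i\le N}\big(1-e^{-a_i t}\big)\,dt.$$ $x_\alpha:=\inf\{x\in[0,1]:\sum_k x^{a_k}=\infty\}$, $L(x;\alpha;j):=\sum_{k}a_k^j\frac{x^{a_k}}{1-x^{a_k}}$, $F(x;\alpha):=\prod_{k}(1-x^{a_k})$, $I(\alpha;j):=\frac{1}{(j-1)!}\int_0^{x_\alpha}L(x;\alpha;j)F(x;\alpha)|\ln x|^{j-1}\frac{dx}{x}$. *)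

theory Defs
  imports "HOL-Analysis.Analysis" "HOL-Library.Landau_Symbols"
begin

text \<open>The sequence alpha is a :: nat => nat, used only at indices k >= 1.\<close>

definition mult_count :: "(nat \<Rightarrow> nat) \<Rightarrow> nat \<Rightarrow> nat" where
  "mult_count a m = card {k. 1 \<le> k \<and> a k = m}"

text \<open>E[U_j^N], given by the integral formula of the paper.\<close>
definition EU :: "(nat \<Rightarrow> nat) \<Rightarrow> nat \<Rightarrow> nat \<Rightarrow> real" where
  "EU a N j = (\<Sum>k\<in>{1..N}. LINT t:{0..}|lborel.
      real (a k) * exp (- real (a k) * t) * (real (a k) * t) ^ (j - 1) / fact (j - 1)
      * (\<Prod>i\<in>{1..N} - {k}. 1 - exp (- real (a i) * t)))"

definition x_alpha :: "(nat \<Rightarrow> nat) \<Rightarrow> real" where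
  "x_alpha a = Inf {x \<in> {0..1}. \<not> summable (\<lambda>k. x ^ a (Suc k))}"

definition L_fun :: "real \<Rightarrow> (nat \<Rightarrow> nat) \<Rightarrow> nat \<Rightarrow> real" where
  "L_fun x a j = (\<Sum>k. real (a (Suc k)) ^ j * x ^ a (Suc k) / (1 - x ^ a (Suc k)))"

definition F_fun :: "real \<Rightarrow> (nat \<Rightarrow> nat) \<Rightarrow> real" where
  "F_fun x a = (\<Prod>k. 1 - x ^ a (Suc k))"

definition I_integrand :: "(nat \<Rightarrow> nat) \<Rightarrow> nat \<Rightarrow> real \<Rightarrow> real" where
  "I_integrand a j x = L_fun x a j * F_fun x a * \<bar>ln x\<bar> ^ (j - 1) / x"

definition I_val :: "(nat \<Rightarrow> nat) \<Rightarrow> nat \<Rightarrow> real" where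
  "I_val a j = (1 / fact (j - 1)) * (LINT x:{0<..<x_alpha a}|lborel. I_integrand a j x)"

end

theory Submission
  imports Defs "HOL-Probability.Distributions"
begin

text \<open>Substituting x = exp (-t), the integrand of E[U_j^N] becomes
  t^(j-1)/(j-1)! * L_N(x) * F_N(x), where L_N and F_N are the N-th partial sum and partial product
  defining L and F. If A(m) <= C m^n, grouping the terms of L_N by the value of a_k yields
  L_N(x) <= K x / (1-x)^q with q = n + j + 2, uniformly in N, while the first q factors of F_N
  give F_N(x) <= P (1-x)^q. So for N >= q all integrands are dominated by a multiple of the
  Erlang density t^(j-1) exp (-t); dominated convergence and the substitution back to x then give
  I(alpha; j). The same bound shows that the sum of x^(a_k) converges for x < 1, so x_alpha = 1.\<close>

lemma power_Suc_diff_le: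
  fixes y :: real assumes "0 \<le> y"
  shows "(y + 1) ^ Suc n - y ^ Suc n \<le> real (Suc n) * (y + 1) ^ n"
proof (induction n)
  case (Suc n)
  have "y ^ Suc n \<le> (y + 1) ^ Suc n" using assms by (intro power_mono) auto
  have "(y + 1) ^ Suc (Suc n) - y ^ Suc (Suc n) = (y + 1) * ((y + 1) ^ Suc n - y ^ Suc n) + y ^ Suc n"
    by (simp add: algebra_simps)
  also have "\<dots> \<le> (y + 1) * (real (Suc n) * (y + 1) ^ n) + (y + 1) ^ Suc n"
    using Suc.IH \<open>y ^ Suc n \<le> (y + 1) ^ Suc n\<close> assms by (intro add_mono mult_left_mono) auto
  also have "\<dots> = real (Suc (Suc n)) * (y + 1) ^ Suc n" by (simp add: algebra_simps)
  finally show ?case .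
qed simp

text \<open>Telescoping, with m^(q+1) - (m-1)^(q+1) <= (q+1) m^q.\<close>

lemma sum_power_mult_geometric_step:
  fixes x :: real assumes "0 \<le> x"
  shows "(1 - x) * (\<Sum>m=1..M. real m ^ Suc q * x ^ m) + real M ^ Suc q * x ^ Suc M
           \<le> real (Suc q) * (\<Sum>m=1..M. real m ^ q * x ^ m)"
proof (induction M)
  case (Suc M)
  have "((real M + 1) ^ Suc q - real M ^ Suc q) * x ^ Suc M \<le> (real (Suc q) * (real M + 1) ^ q) * x ^ Suc M"
    using power_Suc_diff_le[of "real M" q] assms by (intro mult_right_mono) auto
  with Suc.IH show ?case
    by (simp add: algebra_simps)
qed simp

lemma sum_power_mult_geometric_le:
  fixes x :: real assumes x: "0 \<le> x" "x < 1"
  shows "(\<Sum>m=1..M. real m ^ q * x ^ m) \<le> fact q * x / (1 - x) ^ Suc q"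
proof (induction q arbitrary: M)
  case 0
  have "(\<Sum>m=1..M. x ^ m) = (if M < 1 then 0 else (x - x ^ Suc M) / (1 - x))"
    using x by (simp add: sum_gp)
  also have "\<dots> \<le> x / (1 - x)"
    using x by (auto intro: divide_right_mono)
  finally show ?case by simp
next
  case (Suc q)
  have "0 \<le> real M ^ Suc q * x ^ Suc M" using x by simp
  then have "(1 - x) * (\<Sum>m=1..M. real m ^ Suc q * x ^ m) \<le> real (Suc q) * (\<Sum>m=1..M. real m ^ q * x ^ m)"
    using sum_power_mult_geometric_step[OF x(1), where M=M and q=q] by linarith
  also have "\<dots> \<le> real (Suc q) * (fact q * x / (1 - x) ^ Suc q)"
    using Suc.IH by (intro mult_left_mono) auto
  finally have "(\<Sum>m=1..M. real m ^ Suc q * x ^ m) \<le> real (Suc q) * (fact q * x / (1 - x) ^ Suc q) / (1 - x)"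
    using x by (subst pos_le_divide_eq) (auto simp: mult.commute)
  also have "\<dots> = fact (Suc q) * x / (1 - x) ^ Suc (Suc q)"
    by (simp add: mult_ac)
  finally show ?case .
qed

lemma bigo_powr_imp_power_bound:
  fixes f :: "nat \<Rightarrow> real"
  assumes "f \<in> O(\<lambda>m. real m powr \<nu>)"
  shows "\<exists>C n. \<forall>m>0. \<bar>f m\<bar> \<le> C * real m ^ n"
proof -
  obtain c where "c > 0" and "eventually (\<lambda>m. norm (f m) \<le> c * norm (real m powr \<nu>)) at_top"
    using landau_o.bigE[OF assms] by blast
  then obtain M where M: "\<And>m. m \<ge> M \<Longrightarrow> \<bar>f m\<bar> \<le> c * real m powr \<nu>"
    unfolding eventually_at_top_linorder by auto
  define B where "B = (\<Sum>m<M. \<bar>f m\<bar>)"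
  define n where "n = nat \<lceil>\<nu>\<rceil>"
  have "\<bar>f m\<bar> \<le> (c + B) * real m ^ n" if "m > 0" for m
  proof -
    have "real m powr \<nu> \<le> real m powr real n"
      using that unfolding n_def by (intro powr_mono) linarith+
    also have "\<dots> = real m ^ n" using that by (simp add: powr_realpow)
    finally have powr_le: "real m powr \<nu> \<le> real m ^ n" .
    have "1 \<le> real m ^ n" using that by simp
    moreover have "\<bar>f m\<bar> \<le> B" if "m < M"
      unfolding B_def using that by (intro member_le_sum) auto
    moreover have "0 \<le> B" unfolding B_def by (intro sum_nonneg) auto
    ultimately have "\<bar>f m\<bar> \<le> c * real m powr \<nu> + B * real m ^ n"
      using M[of m] \<open>c > 0\<close> mult_le_cancel_left1[of B "real m ^ n"]
      by (cases "m < M") (auto intro: add_increasing2 add_increasing)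
    also have "\<dots> \<le> (c + B) * real m ^ n"
      using powr_le \<open>c > 0\<close> by (simp add: distrib_right)
    finally show ?thesis .
  qed
  then show ?thesis by blast
qed

lemma one_minus_power_le:
  fixes x :: real assumes "0 \<le> x" "x \<le> 1"
  shows "1 - x ^ n \<le> real n * (1 - x)"
  using Bernoulli_inequality[of "- (1 - x)" n] assms by (simp add: algebra_simps)

lemma integrable_erlang_density:
  assumes "l > 0" shows "integrable lborel (erlang_density k l)"
proof (rule integrableI_nonneg)
  have "(\<integral>\<^sup>+x. ennreal (erlang_density k l x * x ^ 0) \<partial>lborel) = fact (k + 0) / (fact k * l ^ 0)"
    by (rule nn_integral_erlang_ith_moment[OF assms])
  then show "(\<integral>\<^sup>+x. ennreal (erlang_density k l x) \<partial>lborel) < \<infinity>" by simp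
qed (use assms in auto)

lemma set_integrable_exp_neg_substitution:
  fixes f :: "real \<Rightarrow> real"
  assumes f: "set_borel_measurable lborel {0<..<1} f"
    and int: "set_integrable lborel {0<..} (\<lambda>t. exp (- t) * f (exp (- t)))"
  shows "set_integrable lborel {0<..<1} f"
    and "(LINT x:{0<..<1}|lborel. f x) = (LINT t:{0<..}|lborel. exp (- t) * f (exp (- t)))"
proof -
  have image: "(\<lambda>t. exp (- t)) ` {0<..} = {0::real<..<1}"
  proof (intro equalityI subsetI)
    fix x :: real assume "x \<in> {0<..<1}"
    then have "x = exp (- (- ln x))" "- ln x \<in> {0<..}" by auto
    then show "x \<in> (\<lambda>t. exp (- t)) ` {0<..}" by blast
  qed auto
  have "(\<lambda>t. \<bar>- exp (- t)\<bar> *\<^sub>R f (exp (- t))) absolutely_integrable_on {0<..}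
        \<and> integral {0<..} (\<lambda>t. \<bar>- exp (- t)\<bar> *\<^sub>R f (exp (- t))) = (LINT t:{0<..}|lborel. exp (- t) * f (exp (- t)))"
  proof
    show "(\<lambda>t. \<bar>- exp (- t)\<bar> *\<^sub>R f (exp (- t))) absolutely_integrable_on {0<..}"
      using int integrable_completion borel_measurable_integrable unfolding set_integrable_def by simp blast
  qed (use set_borel_integral_eq_integral(2)[OF int] in simp)
  then have "f absolutely_integrable_on {0<..<1}
        \<and> integral {0<..<1} f = (LINT t:{0<..}|lborel. exp (- t) * f (exp (- t)))"
    by (subst (asm) has_absolute_integral_change_of_variables_real)
       (auto simp: image inj_on_def intro!: derivative_eq_intros)
  then show si: "set_integrable lborel {0<..<1} f"
    using f integrable_completion unfolding set_integrable_def set_borel_measurable_def by blast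
  show "(LINT x:{0<..<1}|lborel. f x) = (LINT t:{0<..}|lborel. exp (- t) * f (exp (- t)))"
    using set_borel_integral_eq_integral(2)[OF si] \<open>f absolutely_integrable_on _ \<and> _\<close> by simp
qed

locale polynomial_multiplicities =
  fixes a :: "nat \<Rightarrow> nat" and n :: nat and C :: real
  assumes pos: "\<And>k. 1 \<le> k \<Longrightarrow> a k > 0"
    and fin: "\<And>m. finite {k. 1 \<le> k \<and> a k = m}"
    and mult_count_le: "\<And>m. real (mult_count a m) \<le> C * real m ^ n"
begin

lemma C_nonneg: "0 \<le> C"
  using mult_count_le[of 1] by simp

lemma one_le_a_Suc: "1 \<le> a (Suc k)"
  using pos[of "Suc k"] by simp

lemma card_prefix_le_mult_count: "card {k. k < N \<and> a (Suc k) = m} \<le> mult_count a m"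
proof -
  have "Suc ` {k. k < N \<and> a (Suc k) = m} \<subseteq> {k. 1 \<le> k \<and> a k = m}" by auto
  then have "card (Suc ` {k. k < N \<and> a (Suc k) = m}) \<le> mult_count a m"
    unfolding mult_count_def by (intro card_mono fin)
  then show ?thesis by (simp add: card_image)
qed

lemma sum_weighted_powers_le:
  fixes x :: real assumes x: "0 \<le> x" "x < 1"
  shows "(\<Sum>k<N. real (a (Suc k)) ^ j * x ^ a (Suc k)) \<le> C * fact (n + j) * x / (1 - x) ^ Suc (n + j)"
proof -
  define b where "b k = a (Suc k)" for k
  define M where "M = (\<Sum>k<N. b k)"
  have range: "b ` {..<N} \<subseteq> {1..M}"
    using one_le_a_Suc by (auto simp: b_def M_def intro!: member_le_sum)
  have "(\<Sum>k<N. real (b k) ^ j * x ^ b k)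
      = (\<Sum>m=1..M. \<Sum>k\<in>{k \<in> {..<N}. b k = m}. real (b k) ^ j * x ^ b k)"
    by (rule sum.group[symmetric]) (use range in auto)
  also have "\<dots> = (\<Sum>m=1..M. real (card {k. k < N \<and> a (Suc k) = m}) * (real m ^ j * x ^ m))"
    by (intro sum.cong refl) (simp add: b_def)
  also have "\<dots> \<le> (\<Sum>m=1..M. C * real m ^ n * (real m ^ j * x ^ m))"
  proof (intro sum_mono mult_right_mono)
    fix m
    show "real (card {k. k < N \<and> a (Suc k) = m}) \<le> C * real m ^ n"
      using card_prefix_le_mult_count[of N m] mult_count_le[of m] by linarith
  qed (use x in auto)
  also have "\<dots> = C * (\<Sum>m=1..M. real m ^ (n + j) * x ^ m)"
    by (simp add: sum_distrib_left power_add mult_ac)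
  also have "\<dots> \<le> C * (fact (n + j) * x / (1 - x) ^ Suc (n + j))"
    using sum_power_mult_geometric_le[OF x] C_nonneg by (intro mult_left_mono) auto
  finally show ?thesis by (simp add: b_def)
qed

lemma summable_power_terms:
  fixes x :: real assumes x: "0 \<le> x" "x < 1"
  shows "summable (\<lambda>k. x ^ a (Suc k))"
proof (rule summableI_nonneg_bounded)
  fix N
  show "(\<Sum>k<N. x ^ a (Suc k)) \<le> C * fact (n + 0) * x / (1 - x) ^ Suc (n + 0)"
    using sum_weighted_powers_le[OF x, where N=N and j=0] by simp
qed (use x in auto)

lemma x_alpha_eq_1: "x_alpha a = 1"
proof -
  have "\<not> summable (\<lambda>k. (1::real))"
    by (metis LIMSEQ_unique summable_LIMSEQ_zero tendsto_const zero_neq_one)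
  then have "{x \<in> {0..1}. \<not> summable (\<lambda>k. x ^ a (Suc k))} = {1::real}"
    using summable_power_terms by force
  then show ?thesis unfolding x_alpha_def by simp
qed

definition L_partial :: "nat \<Rightarrow> nat \<Rightarrow> real \<Rightarrow> real" where
  "L_partial j N x = (\<Sum>k<N. real (a (Suc k)) ^ j * x ^ a (Suc k) / (1 - x ^ a (Suc k)))"

definition F_partial :: "nat \<Rightarrow> real \<Rightarrow> real" where
  "F_partial N x = (\<Prod>k<N. 1 - x ^ a (Suc k))"

lemma power_a_Suc_le:
  fixes x :: real assumes "0 \<le> x" "x \<le> 1" shows "x ^ a (Suc k) \<le> x"
  using power_decreasing[of 1 "a (Suc k)" x] one_le_a_Suc[of k] assms by simp

lemma L_term_bounds:
  fixes x :: real assumes x: "0 \<le> x" "x < 1"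
  shows "0 \<le> real (a (Suc k)) ^ j * x ^ a (Suc k) / (1 - x ^ a (Suc k))"
    and "real (a (Suc k)) ^ j * x ^ a (Suc k) / (1 - x ^ a (Suc k)) \<le> real (a (Suc k)) ^ j * x ^ a (Suc k) / (1 - x)"
  using power_a_Suc_le[of x k] x by (auto intro!: divide_left_mono divide_nonneg_pos)

lemma L_partial_nonneg:
  fixes x :: real assumes "0 \<le> x" "x < 1" shows "0 \<le> L_partial j N x"
  unfolding L_partial_def using L_term_bounds(1)[OF assms] by (intro sum_nonneg) auto

lemma L_partial_le:
  fixes x :: real assumes x: "0 \<le> x" "x < 1"
  shows "L_partial j N x \<le> C * fact (n + j) * x / (1 - x) ^ Suc (Suc (n + j))"
proof -
  have "L_partial j N x \<le> (\<Sum>k<N. real (a (Suc k)) ^ j * x ^ a (Suc k)) / (1 - x)"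
    unfolding L_partial_def sum_divide_distrib using L_term_bounds(2)[OF x] by (intro sum_mono) auto
  also have "\<dots> \<le> (C * fact (n + j) * x / (1 - x) ^ Suc (n + j)) / (1 - x)"
    using sum_weighted_powers_le[OF x] x by (intro divide_right_mono) auto
  finally show ?thesis by (simp add: mult_ac)
qed

lemma L_partial_tendsto:
  fixes x :: real assumes x: "0 \<le> x" "x < 1"
  shows "(\<lambda>N. L_partial j N x) \<longlonglongrightarrow> L_fun x a j"
proof -
  have "summable (\<lambda>k. real (a (Suc k)) ^ j * x ^ a (Suc k) / (1 - x ^ a (Suc k)))"
    using L_term_bounds(1)[OF x] L_partial_le[OF x]
    by (intro summableI_nonneg_bounded) (auto simp: L_partial_def)
  then show ?thesis
    unfolding L_partial_def L_fun_def by (rule summable_LIMSEQ)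
qed

lemma F_partial_tendsto:
  fixes x :: real assumes x: "0 \<le> x" "x < 1"
  shows "(\<lambda>N. F_partial N x) \<longlonglongrightarrow> F_fun x a"
proof -
  have "convergent_prod (\<lambda>k. 1 - x ^ a (Suc k))"
    using summable_power_terms[OF x] x
    by (intro abs_convergent_prod_imp_convergent_prod summable_imp_abs_convergent_prod) simp
  then have "(\<lambda>N. F_partial (Suc N) x) \<longlonglongrightarrow> F_fun x a"
    unfolding F_fun_def F_partial_def lessThan_Suc_atMost by (rule convergent_prod_LIMSEQ)
  then show ?thesis by (rule LIMSEQ_imp_Suc)
qed

lemma F_partial_nonneg:
  fixes x :: real assumes "0 \<le> x" "x \<le> 1" shows "0 \<le> F_partial N x"
  unfolding F_partial_def using assms by (intro prod_nonneg) (auto simp: power_le_one)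

lemma F_partial_antimono:
  fixes x :: real assumes x: "0 \<le> x" "x \<le> 1" and "M \<le> N"
  shows "F_partial N x \<le> F_partial M x"
proof -
  have "F_partial N x = F_partial M x * (\<Prod>k\<in>{M..<N}. 1 - x ^ a (Suc k))"
    unfolding F_partial_def using \<open>M \<le> N\<close> by (metis prod.atLeastLessThan_concat lessThan_atLeast0 zero_le)
  also have "\<dots> \<le> F_partial M x"
    using x F_partial_nonneg[OF x] by (intro mult_left_le prod_le_1) (auto simp: power_le_one)
  finally show ?thesis .
qed

lemma F_partial_le:
  fixes x :: real assumes x: "0 \<le> x" "x \<le> 1"
  shows "F_partial M x \<le> (\<Prod>k<M. real (a (Suc k))) * (1 - x) ^ M"
proof -
  have "F_partial M x \<le> (\<Prod>k<M. real (a (Suc k)) * (1 - x))"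
    unfolding F_partial_def using x one_minus_power_le
    by (intro prod_mono) (auto simp: power_le_one)
  then show ?thesis by (simp add: prod.distrib)
qed

end

locale coupon_collectors = polynomial_multiplicities +
  fixes j :: nat
  assumes two_le_j: "2 \<le> j"
begin

definition EU_summand :: "nat \<Rightarrow> nat \<Rightarrow> real \<Rightarrow> real" where
  "EU_summand N k t = real (a k) * exp (- real (a k) * t) * (real (a k) * t) ^ (j - 1) / fact (j - 1)
      * (\<Prod>i\<in>{1..N} - {k}. 1 - exp (- real (a i) * t))"

definition EU_density :: "nat \<Rightarrow> real \<Rightarrow> real" where
  "EU_density N t = (\<Sum>k\<in>{1..N}. EU_summand N k t)"

lemma power_j_eq_mult_power: "x ^ j = x * x ^ (j - 1)"
  using two_le_j by (metis Suc_diff_1 less_le_trans pos2 power_Suc)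

lemma EU_summand_bounds:
  assumes k: "k \<in> {1..N}" and t: "0 \<le> t"
  shows "0 \<le> EU_summand N k t" and "EU_summand N k t \<le> erlang_density (j - 1) (real (a k)) t"
proof -
  define P where "P = (\<Prod>i\<in>{1..N} - {k}. 1 - exp (- real (a i) * t))"
  have P: "0 \<le> P" "P \<le> 1"
    unfolding P_def using t by (auto intro!: prod_nonneg prod_le_1)
  have "EU_summand N k t = erlang_density (j - 1) (real (a k)) t * P"
    using t two_le_j unfolding EU_summand_def erlang_density_def P_def
    by (simp add: power_mult_distrib power_j_eq_mult_power mult_ac)
  moreover have "0 \<le> erlang_density (j - 1) (real (a k)) t" by simp
  ultimately show "0 \<le> EU_summand N k t" and "EU_summand N k t \<le> erlang_density (j - 1) (real (a k)) t"
    using P by (simp_all add: mult_left_le)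
qed

lemma set_integrable_EU_summand:
  assumes k: "k \<in> {1..N}" shows "set_integrable lborel {0..} (EU_summand N k)"
  unfolding set_integrable_def
proof (rule Bochner_Integration.integrable_bound)
  show "integrable lborel (erlang_density (j - 1) (real (a k)))"
    using pos k by (intro integrable_erlang_density) auto
  show "AE t in lborel. norm (indicator {0..} t *\<^sub>R EU_summand N k t) \<le> norm (erlang_density (j - 1) (real (a k)) t)"
    using EU_summand_bounds[OF k] by (intro AE_I2) (auto simp: indicator_def)
qed (simp add: EU_summand_def)

lemma EU_density_at_0: "EU_density N 0 = 0"
  using two_le_j by (simp add: EU_density_def EU_summand_def power_0_left)

lemma EU_eq_integral: "EU a N j = (LINT t:{0<..}|lborel. EU_density N t)"
proof -
  have "EU a N j = (\<Sum>k\<in>{1..N}. LINT t:{0..}|lborel. EU_summand N k t)"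
    unfolding EU_def EU_summand_def ..
  also have "\<dots> = (LINT t:{0..}|lborel. EU_density N t)"
    using set_integrable_EU_summand
    unfolding EU_density_def set_lebesgue_integral_def set_integrable_def scaleR_sum_right
    by (intro Bochner_Integration.integral_sum[symmetric]) auto
  also have "\<dots> = (LINT t:{0<..}|lborel. EU_density N t)"
    unfolding set_lebesgue_integral_def
    by (intro Bochner_Integration.integral_cong) (auto simp: indicator_def EU_density_at_0)
  finally show ?thesis .
qed

lemma EU_density_eq:
  assumes t: "0 < t"
  shows "EU_density N t = t ^ (j - 1) / fact (j - 1) * L_partial j N (exp (- t)) * F_partial N (exp (- t))"
proof -
  define x where "x = exp (- t)"
  have x: "0 < x" "x < 1" unfolding x_def using t by auto
  have exp_eq: "exp (- real m * t) = x ^ m" for m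
    unfolding x_def by (simp add: exp_of_nat_mult[symmetric])
  have power_lt: "x ^ a k < 1" if "1 \<le> k" for k
    using x pos[OF that] by (simp add: power_less_one_iff)
  define P where "P = (\<Prod>i\<in>{1..N}. 1 - x ^ a i)"
  have "EU_summand N k t = t ^ (j - 1) / fact (j - 1) * (real (a k) ^ j * x ^ a k / (1 - x ^ a k)) * P"
    if k: "k \<in> {1..N}" for k
  proof -
    have "P = (1 - x ^ a k) * (\<Prod>i\<in>{1..N} - {k}. 1 - x ^ a i)"
      unfolding P_def using k by (simp add: prod.remove)
    then have "(\<Prod>i\<in>{1..N} - {k}. 1 - x ^ a i) = P / (1 - x ^ a k)"
      using power_lt[of k] k by (simp add: field_simps)
    then show ?thesis
      unfolding EU_summand_def exp_eq power_j_eq_mult_power by (simp add: field_simps)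
  qed
  then have "EU_density N t = t ^ (j - 1) / fact (j - 1) * (\<Sum>k=1..N. real (a k) ^ j * x ^ a k / (1 - x ^ a k)) * P"
    unfolding EU_density_def by (simp add: sum_distrib_left sum_distrib_right)
  also have "\<dots> = t ^ (j - 1) / fact (j - 1) * L_partial j N x * F_partial N x"
    unfolding L_partial_def F_partial_def P_def
    using sum.atLeast1_atMost_eq[of "\<lambda>k. real (a k) ^ j * x ^ a k / (1 - x ^ a k)" N]
      prod.atLeast1_atMost_eq[of "\<lambda>k. 1 - x ^ a k" N] by simp
  finally show ?thesis unfolding x_def .
qed

text \<open>For t > 0 this is t^(j-1)/(j-1)! * L(exp (-t)) * F(exp (-t)), since |ln (exp (-t))| = t.\<close>

definition subst_integrand :: "real \<Rightarrow> real" where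
  "subst_integrand t = exp (- t) * (I_integrand a j (exp (- t)) / fact (j - 1))"

lemma EU_density_tendsto:
  assumes t: "0 < t" shows "(\<lambda>N. EU_density N t) \<longlonglongrightarrow> subst_integrand t"
proof -
  define x where "x = exp (- t)"
  have x: "0 \<le> x" "x < 1" unfolding x_def using t by auto
  have "subst_integrand t = t ^ (j - 1) / fact (j - 1) * L_fun x a j * F_fun x a"
    using t unfolding subst_integrand_def I_integrand_def x_def by simp
  moreover have "(\<lambda>N. t ^ (j - 1) / fact (j - 1) * L_partial j N x * F_partial N x)
      \<longlonglongrightarrow> t ^ (j - 1) / fact (j - 1) * L_fun x a j * F_fun x a"
    by (intro tendsto_mult tendsto_const L_partial_tendsto[OF x] F_partial_tendsto[OF x])
  ultimately show ?thesis
    using t by (simp add: EU_density_eq x_def)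
qed

text \<open>The first n + j + 2 factors of F_N cancel the pole of the bound on L_N at x = 1.\<close>

lemma EU_density_le_erlang:
  assumes N: "Suc (Suc (n + j)) \<le> N" and t: "0 < t"
  shows "0 \<le> EU_density N t"
    and "EU_density N t \<le> C * fact (n + j) * (\<Prod>k<Suc (Suc (n + j)). real (a (Suc k)))
                            * erlang_density (j - 1) 1 t"
proof -
  define M where "M = Suc (Suc (n + j))"
  define P where "P = (\<Prod>k<M. real (a (Suc k)))"
  define x where "x = exp (- t)"
  have x: "0 \<le> x" "x < 1" unfolding x_def using t by auto
  have LF: "0 \<le> L_partial j N x" "0 \<le> F_partial N x"
    using L_partial_nonneg[OF x] F_partial_nonneg[of x] x by auto
  have "L_partial j N x * F_partial N x \<le> (C * fact (n + j) * x / (1 - x) ^ M) * F_partial N x"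
    using L_partial_le[OF x] LF by (intro mult_right_mono) (auto simp: M_def)
  also have "\<dots> \<le> (C * fact (n + j) * x / (1 - x) ^ M) * (P * (1 - x) ^ M)"
    using F_partial_antimono[of x M N] F_partial_le[of x M] x N C_nonneg
    by (intro mult_left_mono) (auto simp: M_def P_def)
  also have "\<dots> = C * fact (n + j) * P * x"
    using x by (simp add: field_simps)
  finally have "L_partial j N x * F_partial N x \<le> C * fact (n + j) * P * x" .
  then have "t ^ (j - 1) / fact (j - 1) * (L_partial j N x * F_partial N x)
      \<le> t ^ (j - 1) / fact (j - 1) * (C * fact (n + j) * P * x)"
    using t by (intro mult_left_mono) auto
  then show "EU_density N t \<le> C * fact (n + j) * (\<Prod>k<Suc (Suc (n + j)). real (a (Suc k)))
                                * erlang_density (j - 1) 1 t"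
    using t by (simp add: EU_density_eq erlang_density_def M_def P_def x_def mult_ac)
  show "0 \<le> EU_density N t"
    using t LF by (simp add: EU_density_eq x_def)
qed

lemma EU_density_measurable[measurable]: "EU_density N \<in> borel_measurable lborel"
  unfolding EU_density_def EU_summand_def by measurable

lemma tendsto_EU_integral:
  shows "set_integrable lborel {0<..} subst_integrand"
    and "(\<lambda>N. EU a N j) \<longlonglongrightarrow> (LINT t:{0<..}|lborel. subst_integrand t)"
proof -
  define M where "M = Suc (Suc (n + j))"
  define W where "W t = C * fact (n + j) * (\<Prod>k<M. real (a (Suc k))) * erlang_density (j - 1) 1 t" for t
  define s where "s i t = indicator {0<..} t * EU_density (i + M) t" for i t
  have s_tendsto: "(\<lambda>i. s i t) \<longlonglongrightarrow> indicator {0<..} t * subst_integrand t" for t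
    using LIMSEQ_ignore_initial_segment[OF EU_density_tendsto, of t M]
    by (cases "0 < t") (simp_all add: s_def)
  have s_bound: "norm (s i t) \<le> W t" for i t
    using EU_density_le_erlang[of "i + M" t] C_nonneg
    by (cases "0 < t") (auto simp: s_def W_def M_def intro!: mult_nonneg_nonneg prod_nonneg)
  have W: "integrable lborel W"
    unfolding W_def by (intro integrable_mult_right integrable_erlang_density) simp
  have s_meas: "s i \<in> borel_measurable lborel" for i
    unfolding s_def by measurable
  have meas: "(\<lambda>t. indicator {0<..} t * subst_integrand t) \<in> borel_measurable lborel"
    by (rule borel_measurable_LIMSEQ_real[OF s_tendsto s_meas])
  show "set_integrable lborel {0<..} subst_integrand"
    unfolding set_integrable_def real_scaleR_def
    by (rule integrable_dominated_convergence[where s=s, OF meas _ W]) (use s_meas s_tendsto s_bound in auto)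
  have "(\<lambda>i. integral\<^sup>L lborel (s i)) \<longlonglongrightarrow> (LINT t:{0<..}|lborel. subst_integrand t)"
    unfolding set_lebesgue_integral_def
    by (rule integral_dominated_convergence[OF _ _ W]) (use meas s_meas s_tendsto s_bound in auto)
  then have "(\<lambda>i. EU a (i + M) j) \<longlonglongrightarrow> (LINT t:{0<..}|lborel. subst_integrand t)"
    by (simp add: EU_eq_integral s_def[abs_def] set_lebesgue_integral_def)
  then show "(\<lambda>N. EU a N j) \<longlonglongrightarrow> (LINT t:{0<..}|lborel. subst_integrand t)"
    by (rule LIMSEQ_offset)
qed

lemma set_borel_measurable_I_integrand: "set_borel_measurable lborel {0<..<1} (I_integrand a j)"
  unfolding set_borel_measurable_def
proof (rule borel_measurable_LIMSEQ_real)
  fix x :: real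
  show "(\<lambda>N. indicator {0<..<1} x *\<^sub>R (L_partial j N x * F_partial N x * \<bar>ln x\<bar> ^ (j - 1) / x))
      \<longlonglongrightarrow> indicator {0<..<1} x *\<^sub>R I_integrand a j x"
    unfolding I_integrand_def
    by (cases "x \<in> {0<..<1}")
       (auto intro!: tendsto_mult tendsto_divide tendsto_const L_partial_tendsto F_partial_tendsto)
qed (simp add: L_partial_def F_partial_def)

lemma EU_tendsto_I_val:
  "set_integrable lborel {0<..<x_alpha a} (I_integrand a j) \<and> (\<lambda>N. EU a N j) \<longlonglongrightarrow> I_val a j"
proof -
  have f: "set_borel_measurable lborel {0<..<1} (\<lambda>x. I_integrand a j x / fact (j - 1))"
    using set_borel_measurable_I_integrand by (simp add: set_borel_measurable_def)
  note subst = set_integrable_exp_neg_substitution[OF f, folded subst_integrand_def, OF tendsto_EU_integral(1)]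
  have "set_integrable lborel {0<..<1} (\<lambda>x. fact (j - 1) * (I_integrand a j x / fact (j - 1)))"
    using subst(1) by (rule set_integrable_mult_right)
  then have "set_integrable lborel {0<..<1} (I_integrand a j)" by simp
  moreover have "I_val a j = (LINT t:{0<..}|lborel. subst_integrand t)"
    using subst(2) unfolding I_val_def x_alpha_eq_1 by simp
  ultimately show ?thesis
    using tendsto_EU_integral(2) x_alpha_eq_1 by simp
qed

end

theorem corollary2:
  fixes a :: "nat \<Rightarrow> nat" and j :: nat
  assumes pos: "\<And>k. 1 \<le> k \<Longrightarrow> a k > 0"
    and fin: "\<And>m. finite {k. 1 \<le> k \<and> a k = m}"
    and growth: "\<exists>\<nu>::real. \<nu> > 0 \<and> (\<lambda>m. real (mult_count a m)) \<in> O(\<lambda>m. real m powr \<nu>)"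
    and j: "j \<ge> 2"
  shows "set_integrable lborel {0<..<x_alpha a} (I_integrand a j)
         \<and> (\<lambda>N. EU a N j) \<longlonglongrightarrow> I_val a j"
proof -
  obtain C n where bound: "\<forall>m>0. \<bar>real (mult_count a m)\<bar> \<le> C * real m ^ n"
    using growth bigo_powr_imp_power_bound by blast
  have "mult_count a 0 = 0"
    using pos unfolding mult_count_def by (metis (mono_tags, lifting) card.empty empty_Collect_eq less_irrefl)
  moreover have "0 \<le> C"
    using bound[rule_format, of 1] by simp
  ultimately have "real (mult_count a m) \<le> C * real m ^ n" for m
    using bound by (cases "m = 0") auto
  then interpret coupon_collectors a n C j
    using pos fin j by unfold_locales
  show ?thesis by (rule EU_tendsto_I_val)
qed

end
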